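(* For every integer $r\ge1$, the characteristic polynomial of the signed adjacency matrix of $\mathcal{Q}_{r,r,2r}$ is $$\det\bigl(xI-M(\mathcal{Q}_{r,r,2r})\bigr)=(x^2+x-1)^{2r-1}\bigl(x^2-(2r-1)x-1\bigr).$$ In particular $\lambda_{\min}(\mathcal{Q}_{r,r,2r})=-\frac{1+\sqrt5}{2}$.
   Context: An edge-signed graph is a finite simple graph each of whose edges is labelled $+$ or $-$; its signed adjacency matrix $M(\mathcal{S})$ has $(u,v)$-entry $1$ for a $(+)$-edge, $-1$ for a $(-)$-edge, $0$ otherwise, and $\lambda_{\min}(\mathcal{S})$ denotes its smallest eigenvalue. For non-negative integers $p,q,r$ with $p+q\le r$, $\mathcal{Q}_{p,q,r}$ is the edge-signed graph defined as follows: its vertex set is a disjoint union $V_p\cup V_q\cup V_r$ with $|V_p|=p$, $|V_q|=q$, $|V_r|=r$; choose disjoint subsets $U_p,U_q\subseteq V_r$ with $|U_p|=p$, $|U_q|=q$ and bijections $\sigma:V_p\to U_p$, $\rho:V_q\to U_q$. The $(+)$-edges are all pairs of distinct vertices of $V_r$ together with the pairs $\{v,\sigma(v)\}$, $v\in V_p$; the $(-)$-edges are the pairs $\{v,\rho(v)\}$, $v\in V_q$; there are no other edges. *)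

theory Defs
  imports "Jordan_Normal_Form.Char_Poly"
begin

text \<open>Concrete labelling of Q_{p,q,r} on vertices 0..p+q+r-1:
  V_r = {0..<r}, V_p = {r..<r+p}, V_q = {r+p..<r+p+q};
  sigma(r+i) = i (so U_p = {0..<p}), rho(r+p+j) = p+j (so U_q = {p..<p+q}).\<close>

definition Q_plus_edge :: "nat \<Rightarrow> nat \<Rightarrow> nat \<Rightarrow> nat \<Rightarrow> nat \<Rightarrow> bool" where
  "Q_plus_edge p q r u v \<longleftrightarrow>
     (u < r \<and> v < r \<and> u \<noteq> v)
     \<or> (r \<le> u \<and> u < r + p \<and> v = u - r)
     \<or> (r \<le> v \<and> v < r + p \<and> u = v - r)"

definition Q_minus_edge :: "nat \<Rightarrow> nat \<Rightarrow> nat \<Rightarrow> nat \<Rightarrow> nat \<Rightarrow> bool" where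
  "Q_minus_edge p q r u v \<longleftrightarrow>
     (r + p \<le> u \<and> u < r + p + q \<and> v = u - r)
     \<or> (r + p \<le> v \<and> v < r + p + q \<and> u = v - r)"

definition Q_mat :: "nat \<Rightarrow> nat \<Rightarrow> nat \<Rightarrow> real mat" where
  "Q_mat p q r = mat (p + q + r) (p + q + r)
     (\<lambda>(u, v). if Q_plus_edge p q r u v then 1
               else if Q_minus_edge p q r u v then -1 else 0)"

definition lambda_min :: "real mat \<Rightarrow> real" where
  "lambda_min A = Min {k. eigenvalue A k}"

end

theory Submission imports Defs begin

(* Order the 4r vertices as V_r followed by V_p and V_q (the labelling of Defs).
   Then M = M(Q_{r,r,2r}) is the block matrix [[J - I, S], [S, 0]] where J is the
   all-ones 2r x 2r matrix and S = diag(-1,...,-1,1,...,1) is a signature matrix,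
   so xI - M = -[[(x+1)I - J, S], [S, xI]].  The lower right block commutes with
   everything, hence the block determinant formula gives
     det (xI - M) = det (x((x+1)I - J) - S^2) = det ((x^2+x-1) I - x J),
   and a matrix cI - dJ of size m has determinant c^(m-1) (c - m d), proved below
   by one column and one row operation that make it upper triangular.  This yields
   the characteristic polynomial; its roots are the two roots of x^2+x-1 and the
   two roots of x^2-(2r-1)x-1, the smallest of which is -(1+sqrt 5)/2. *)

definition scalar_minus_ones_mat :: "nat \<Rightarrow> 'a::comm_ring_1 \<Rightarrow> 'a \<Rightarrow> 'a mat" where
  "scalar_minus_ones_mat m c d = mat m m (\<lambda>(i, j). (if i = j then c else 0) - d)"

text \<open>Adding all columns to the first one makes the first column constant \<open>c - m d\<close>.\<close>
lemma scalar_minus_ones_mat_add_columns: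
  "scalar_minus_ones_mat m c d * mat m m (\<lambda>(i, j). if i = j \<or> j = 0 then 1 else 0) =
   mat m m (\<lambda>(i, j). if j = 0 then c - of_nat m * d else (if i = j then c else 0) - d)"
  (is "?M * ?R = ?N")
proof (rule eq_matI)
  fix i j assume "i < dim_row ?N" "j < dim_col ?N"
  hence i: "i < m" and j: "j < m" by auto
  have "(?M * ?R) $$ (i, j) =
        (\<Sum>l<m. ((if i = l then c else 0) - d) * (if l = j \<or> j = 0 then 1 else 0))"
    using i j by (simp add: scalar_minus_ones_mat_def scalar_prod_def atLeast0LessThan)
  also have "\<dots> = ?N $$ (i, j)"
  proof (cases "j = 0")
    case True
    then show ?thesis using i by (simp add: sum_subtractf)
  next
    case False
    then show ?thesis using i j by (simp add: if_distrib cong: if_cong)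
  qed
  finally show "(?M * ?R) $$ (i, j) = ?N $$ (i, j)" .
qed (auto simp: scalar_minus_ones_mat_def)

text \<open>Subtracting the first row from all others then leaves an upper triangular matrix.\<close>
lemma subtract_first_row_upper_triangular:
  fixes c d :: "'a::comm_ring_1"
  assumes "m \<ge> 1"
  shows "mat m m (\<lambda>(i, j). (if i = j then 1 else 0) - (if 0 < i \<and> j = 0 then 1 else 0)) *
         mat m m (\<lambda>(i, j). if j = 0 then c - of_nat m * d else (if i = j then c else 0) - d) =
         mat m m (\<lambda>(i, j). if i = 0 then (if j = 0 then c - of_nat m * d else - d)
                            else (if i = j then c else 0))"
  (is "?L * ?N = ?T")
proof (rule eq_matI)
  fix i j assume "i < dim_row ?T" "j < dim_col ?T"
  hence i: "i < m" and j: "j < m" by auto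
  let ?e = "\<lambda>l. if j = 0 then c - of_nat m * d else (if l = j then c else 0) - d"
  have "(?L * ?N) $$ (i, j) = (\<Sum>l<m. ((if i = l then 1 else 0)
          - (if 0 < i \<and> l = 0 then 1 else 0)) * ?e l)"
    using i j by (simp add: scalar_prod_def atLeast0LessThan)
  also have "\<dots> = (\<Sum>l<m. if i = l then ?e l else 0)
          - (if 0 < i then (\<Sum>l<m. if l = 0 then ?e l else 0) else 0)"
    by (simp add: left_diff_distrib sum_subtractf if_distrib[of "\<lambda>u. u * _"] cong: if_cong)
  also have "\<dots> = ?T $$ (i, j)"
    using i j assms by auto
  finally show "(?L * ?N) $$ (i, j) = ?T $$ (i, j)" .
qed auto

text \<open>\<open>det (cI - dJ) = c^(m-1) (c - m d)\<close>: the two triangular operation matrices above are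
  unitriangular, so the determinant is the product of the diagonal of the result.\<close>
lemma det_scalar_minus_ones_mat:
  fixes c d :: "'a::comm_ring_1"
  assumes m: "m \<ge> 1"
  shows "det (scalar_minus_ones_mat m c d) = c ^ (m - 1) * (c - of_nat m * d)"
proof -
  let ?M = "scalar_minus_ones_mat m c d"
  let ?R = "mat m m (\<lambda>(i, j). if i = j \<or> j = 0 then 1 else 0) :: 'a mat"
  let ?L = "mat m m (\<lambda>(i, j). (if i = j then 1 else 0) - (if 0 < i \<and> j = 0 then 1 else 0)) :: 'a mat"
  let ?T = "mat m m (\<lambda>(i, j). if i = 0 then (if j = 0 then c - of_nat m * d else - d)
                              else (if i = j then c else 0))"
  have carriers: "?M \<in> carrier_mat m m" "?R \<in> carrier_mat m m" "?L \<in> carrier_mat m m"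
    by (auto simp: scalar_minus_ones_mat_def)
  have triangular: "?L * (?M * ?R) = ?T"
    unfolding scalar_minus_ones_mat_add_columns by (rule subtract_first_row_upper_triangular[OF m])
  have det_R: "det ?R = 1"
    by (subst det_lower_triangular[OF _ carriers(2)]) (auto simp: prod_list_diag_prod)
  have det_L: "det ?L = 1"
    by (subst det_lower_triangular[OF _ carriers(3)])
       (auto simp: prod_list_diag_prod intro!: prod.neutral)
  have "det ?T = (\<Prod>i<m. ?T $$ (i, i))"
    by (subst det_upper_triangular[of _ m])
       (auto simp: upper_triangular_def prod_list_diag_prod atLeast0LessThan)
  also have "\<dots> = (c - of_nat m * d) * (\<Prod>i\<in>{1..<m}. c)"
    using m by (simp add: lessThan_atLeast0 prod.atLeast_Suc_lessThan del: prod_constant)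
  finally have det_T: "det ?T = c ^ (m - 1) * (c - of_nat m * d)"
    by (simp add: mult.commute)
  have "det ?T = det ?L * det ?M * det ?R"
    unfolding triangular[symmetric] using carriers
    by (simp add: det_mult[of _ m] mult_carrier_mat[of _ m m _ m] mult.assoc)
  with det_R det_L det_T show ?thesis by simp
qed

text \<open>Block determinant with a scalar lower right corner and equal off-diagonal blocks:
  the corner commutes with everything, so \<open>det [[A, B], [B, kI]] = det (kA - B\<^sup>2)\<close>.\<close>
lemma det_four_block_scalar_corner:
  fixes A B :: "'a::idom mat"
  assumes A: "A \<in> carrier_mat n n" and B: "B \<in> carrier_mat n n"
  shows "det (four_block_mat A B B (k \<cdot>\<^sub>m 1\<^sub>m n)) = det (k \<cdot>\<^sub>m A - B * B)"
proof -
  have corner_commutes: "B * (k \<cdot>\<^sub>m 1\<^sub>m n) = (k \<cdot>\<^sub>m 1\<^sub>m n) * B"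
    by (simp add: mult_smult_distrib[OF B one_carrier_mat] mult_smult_assoc_mat[OF one_carrier_mat B]
      right_mult_one_mat[OF B] left_mult_one_mat[OF B])
  have "A * (k \<cdot>\<^sub>m 1\<^sub>m n) = k \<cdot>\<^sub>m A"
    by (simp add: mult_smult_distrib[OF A one_carrier_mat] right_mult_one_mat[OF A])
  then show ?thesis
    using det_four_block_mat[OF A B B smult_carrier_mat[OF one_carrier_mat] corner_commutes]
    by simp
qed

definition signature_mat :: "nat \<Rightarrow> nat \<Rightarrow> 'a::ring_1 mat" where
  "signature_mat n r = mat n n (\<lambda>(i, j). if i = j then (if i < r then -1 else 1) else 0)"

lemma signature_mat_square: "signature_mat n r * signature_mat n r = (1\<^sub>m n :: 'a::ring_1 mat)"
proof (rule eq_matI)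
  fix i j assume "i < dim_row (1\<^sub>m n :: 'a mat)" "j < dim_col (1\<^sub>m n :: 'a mat)"
  hence i: "i < n" and j: "j < n" by auto
  let ?S = "signature_mat n r :: 'a mat"
  have "(?S * ?S) $$ (i, j) = (\<Sum>l\<in>{0..<n}. ?S $$ (i, l) * ?S $$ (l, j))"
    using i j by (simp add: signature_mat_def scalar_prod_def)
  also have "\<dots> = (\<Sum>l\<in>{0..<n}. if l = i then ?S $$ (i, i) * ?S $$ (i, j) else 0)"
    using i j by (intro sum.cong) (auto simp: signature_mat_def)
  also have "\<dots> = 1\<^sub>m n $$ (i, j)"
    using i j by (auto simp: signature_mat_def)
  finally show "(?S * ?S) $$ (i, j) = 1\<^sub>m n $$ (i, j)" .
qed (auto simp: signature_mat_def)

lemma Q_mat_entry: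
  assumes i: "i < 4 * r" and j: "j < 4 * r"
  shows "Q_mat r r (2 * r) $$ (i, j) =
    (if i < 2 * r then (if j < 2 * r then (if i = j then 0 else 1)
                        else (if j - 2 * r = i then (if i < r then 1 else -1) else 0))
     else (if j < 2 * r then (if i - 2 * r = j then (if j < r then 1 else -1) else 0) else 0))"
proof -
  have "i < r + r + 2 * r" "j < r + r + 2 * r" using i j by auto
  then show ?thesis
    by (cases "i < 2 * r"; cases "j < 2 * r")
       (auto simp: Q_mat_def Q_plus_edge_def Q_minus_edge_def)
qed

lemma Q_mat_carrier: "Q_mat r r (2 * r) \<in> carrier_mat (4 * r) (4 * r)"
  by (simp add: Q_mat_def)

text \<open>The block form \<open>kI - M = [[(k+1)I - J, S], [S, kI]]\<close> (the statement is about
  \<open>-(M - kI)\<close>, which is the library's determinant expression for the characteristic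
  polynomial).\<close>
lemma neg_char_matrix_Q_mat_blocks:
  fixes k :: real
  shows "- char_matrix (Q_mat r r (2 * r)) k =
    four_block_mat (scalar_minus_ones_mat (2 * r) (k + 1) 1) (signature_mat (2 * r) r)
                   (signature_mat (2 * r) r) (k \<cdot>\<^sub>m 1\<^sub>m (2 * r))"
  (is "?L = ?R")
proof (rule eq_matI)
  fix i j assume "i < dim_row ?R" "j < dim_col ?R"
  hence i: "i < 4 * r" and j: "j < 4 * r"
    by (auto simp: scalar_minus_ones_mat_def signature_mat_def)
  have L: "?L $$ (i, j) = (if i = j then k else 0) - Q_mat r r (2 * r) $$ (i, j)"
    using i j Q_mat_carrier[of r] by (simp add: char_matrix_def)
  have R: "?R $$ (i, j) =
      (if i < 2 * r then (if j < 2 * r then (if i = j then k + 1 else 0) - 1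
                          else (if i = j - 2 * r then (if i < r then -1 else 1) else 0))
       else (if j < 2 * r then (if i - 2 * r = j then (if i - 2 * r < r then -1 else 1) else 0)
             else (if i - 2 * r = j - 2 * r then k else 0)))"
    using i j by (simp add: scalar_minus_ones_mat_def signature_mat_def)
  show "?L $$ (i, j) = ?R $$ (i, j)"
    unfolding L R Q_mat_entry[OF i j] using i j by auto
qed (auto simp: char_matrix_def Q_mat_def scalar_minus_ones_mat_def signature_mat_def)

lemma smult_scalar_minus_ones_mat_minus_one:
  "k \<cdot>\<^sub>m scalar_minus_ones_mat m c d - 1\<^sub>m m = scalar_minus_ones_mat m (k * c - 1) (k * d)"
  by (rule eq_matI) (auto simp: scalar_minus_ones_mat_def algebra_simps)

lemma det_neg_char_matrix_Q_mat:
  fixes k :: real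
  assumes r: "r \<ge> 1"
  shows "det (- char_matrix (Q_mat r r (2 * r)) k) =
         (k\<^sup>2 + k - 1) ^ (2 * r - 1) * ((k\<^sup>2 + k - 1) - of_nat (2 * r) * k)"
proof -
  let ?A = "scalar_minus_ones_mat (2 * r) (k + 1) 1"
  let ?S = "signature_mat (2 * r) r :: real mat"
  have carriers: "?A \<in> carrier_mat (2 * r) (2 * r)" "?S \<in> carrier_mat (2 * r) (2 * r)"
    by (auto simp: scalar_minus_ones_mat_def signature_mat_def)
  have "det (- char_matrix (Q_mat r r (2 * r)) k) = det (k \<cdot>\<^sub>m ?A - ?S * ?S)"
    unfolding neg_char_matrix_Q_mat_blocks by (rule det_four_block_scalar_corner[OF carriers])
  also have "\<dots> = det (scalar_minus_ones_mat (2 * r) (k\<^sup>2 + k - 1) k)"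
    by (simp add: signature_mat_square smult_scalar_minus_ones_mat_minus_one
        power2_eq_square algebra_simps)
  also have "\<dots> = (k\<^sup>2 + k - 1) ^ (2 * r - 1) * ((k\<^sup>2 + k - 1) - of_nat (2 * r) * k)"
    by (rule det_scalar_minus_ones_mat) (use r in simp)
  finally show ?thesis .
qed

text \<open>The factored characteristic polynomial; equal evaluations everywhere suffice over \<open>\<real>\<close>.\<close>
lemma char_poly_Q_mat:
  assumes r: "r \<ge> 1"
  shows "char_poly (Q_mat r r (2 * r)) =
         [:-1, 1, 1:] ^ (2 * r - 1) * [:-1, - (2 * real r - 1), 1:]"
proof -
  have "poly (char_poly (Q_mat r r (2 * r))) k =
        poly ([:-1, 1, 1:] ^ (2 * r - 1) * [:-1, - (2 * real r - 1), 1:]) k" for k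
    unfolding char_poly_matrix[OF Q_mat_carrier] det_neg_char_matrix_Q_mat[OF r]
    by (simp add: power2_eq_square algebra_simps)
  then show ?thesis by (rule poly_ext)
qed

text \<open>The spectrum of a square matrix is finite (its characteristic polynomial is monic), so
  an eigenvalue below all others is the value of \<open>lambda_min\<close>.\<close>
lemma lambda_min_eqI:
  assumes A: "A \<in> carrier_mat n n"
    and eigen: "eigenvalue A x" and least: "\<And>y. eigenvalue A y \<Longrightarrow> x \<le> y"
  shows "lambda_min A = x"
proof -
  have "char_poly A \<noteq> 0"
    using degree_monic_char_poly[OF A] by auto
  then have "finite {k. eigenvalue A k}"
    unfolding eigenvalue_root_char_poly[OF A] by (rule poly_roots_finite)
  then show ?thesis
    unfolding lambda_min_def using eigen least by (intro Min_eqI) auto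
qed

lemma golden_quadratic_root: "(- (1 + sqrt 5) / 2)\<^sup>2 + (- (1 + sqrt 5) / 2) - 1 = (0::real)"
  by (simp add: power2_eq_square field_simps)

text \<open>Hence every root of \<open>x\<^sup>2 + x - 1\<close> is at least \<open>-(1 + \<surd>5)/2\<close>: the difference of
  the two quadratic values factors as \<open>(y - x)(y + x + 1)\<close>.\<close>
lemma golden_quadratic_root_lower_bound:
  fixes y :: real
  assumes "y\<^sup>2 + y - 1 = 0"
  shows "- (1 + sqrt 5) / 2 \<le> y"
proof (rule ccontr)
  let ?x = "- (1 + sqrt 5) / 2"
  assume below: "\<not> ?x \<le> y"
  have "sqrt 5 > (2::real)" by (rule real_less_rsqrt) simp
  then have "?x < - 3 / 2" by simp
  with below have "(y - ?x) * (y + ?x + 1) > 0"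
    by (intro mult_neg_neg) linarith+
  moreover have "(y - ?x) * (y + ?x + 1) = (y\<^sup>2 + y - 1) - (?x\<^sup>2 + ?x - 1)"
    by (simp add: power2_eq_square algebra_simps)
  ultimately show False
    using assms golden_quadratic_root by simp
qed

lemma quadratic_root_lower_bound:
  fixes b y :: real
  assumes b: "b \<ge> 0" and root: "y\<^sup>2 - b * y - 1 = 0"
  shows "-1 \<le> y"
proof (rule ccontr)
  assume "\<not> -1 \<le> y"
  then have "1 < (- y)\<^sup>2"
    by (intro one_less_power) auto
  moreover have "b * y \<le> 0"
    using b \<open>\<not> -1 \<le> y\<close> by (intro mult_nonneg_nonpos) auto
  ultimately show False using root by simp
qed

lemma eigenvalue_Q_mat_iff:
  assumes r: "r \<ge> 1"
  shows "eigenvalue (Q_mat r r (2 * r)) k \<longleftrightarrow>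
         k\<^sup>2 + k - 1 = 0 \<or> k\<^sup>2 - (2 * real r - 1) * k - 1 = 0"
proof -
  have "poly ([:-1, 1, 1:] ^ (2 * r - 1) * [:-1, - (2 * real r - 1), 1:]) k =
        (k\<^sup>2 + k - 1) ^ (2 * r - 1) * (k\<^sup>2 - (2 * real r - 1) * k - 1)"
    by (simp add: power2_eq_square algebra_simps)
  moreover have "2 * r - 1 \<noteq> 0" using r by simp
  ultimately show ?thesis
    unfolding eigenvalue_root_char_poly[OF Q_mat_carrier] char_poly_Q_mat[OF r] by simp
qed

theorem mainTheorem6:
  fixes r :: nat
  assumes "r \<ge> 1"
  shows "char_poly (Q_mat r r (2 * r)) =
           [:-1, 1, 1:] ^ (2 * r - 1) * [:-1, - (2 * real r - 1), 1:]
         \<and> lambda_min (Q_mat r r (2 * r)) = - (1 + sqrt 5) / 2"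
proof -
  let ?x = "- (1 + sqrt 5) / 2"
  have eigen: "eigenvalue (Q_mat r r (2 * r)) ?x"
    using golden_quadratic_root by (simp add: eigenvalue_Q_mat_iff[OF assms])
  have least: "?x \<le> y" if "eigenvalue (Q_mat r r (2 * r)) y" for y
    using that unfolding eigenvalue_Q_mat_iff[OF assms]
  proof
    assume "y\<^sup>2 + y - 1 = 0"
    then show ?thesis by (rule golden_quadratic_root_lower_bound)
  next
    assume "y\<^sup>2 - (2 * real r - 1) * y - 1 = 0"
    with assms have "-1 \<le> y" by (intro quadratic_root_lower_bound) auto
    moreover have "?x \<le> -1" by simp
    ultimately show ?thesis by linarith
  qed
  show ?thesis
    using char_poly_Q_mat[OF assms] lambda_min_eqI[OF Q_mat_carrier eigen least] by simp
qed

end
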